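(* Let $X$ be a Hausdorff space without isolated points. If \textsc{Bob} has a winning strategy in the game $\mathsf{BM}_\mathrm{fin}(X)$, then $X$ is productively Baire.
   Context: The game $\mathsf{BM}_\mathrm{fin}(X)$ on a topological space $X$ is played by \textsc{Alice} and \textsc{Bob} as follows. \textsc{Alice} plays a non-empty open set $A_0$; \textsc{Bob} plays a finite collection $\mathcal{B}_0$ of non-empty open subsets of $A_0$. In inning $n+1$, for each $B \in \mathcal{B}_n$ \textsc{Alice} plays a non-empty open set $A_B \subseteq B$; let $\mathcal{A}_{n+1}=\{A_B : B\in\mathcal{B}_n\}$; then \textsc{Bob} plays a finite collection $\mathcal{B}_{n+1}$ of non-empty open subsets of $\bigcup\mathcal{A}_{n+1}$. Put $B_n=\bigcup\mathcal{B}_n$. \textsc{Bob} wins the play if $\bigcap_{n\in\omega}B_n\neq\emptyset$; otherwise \textsc{Alice} wins. A Baire space is a space in which countable intersections of dense open sets are dense. A Baire space $X$ is productively Baire if $X\times Y$ is Baire for every Baire space $Y$. *)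

theory Defs
  imports "HOL-Analysis.Analysis"
begin

definition Baire_space :: "'a topology \<Rightarrow> bool" where
  "Baire_space X \<longleftrightarrow>
     (\<forall>U :: nat \<Rightarrow> 'a set.
        (\<forall>n. openin X (U n) \<and> X closure_of (U n) = topspace X) \<longrightarrow>
        X closure_of (topspace X \<inter> (\<Inter>n. U n)) = topspace X)"

text \<open>Alice's move in inning n is represented by a
  function g n assigning to each set B of Bob's previous collection the
  open set A_B = g n B.  For uniformity, inning 0 is treated as a response
  to the collection {topspace X}, i.e. A_0 = g 0 (topspace X).
  Bob's strategy sigma maps the list of Alice's moves so far
  [g 0, ..., g n] to Bob's collection B_n.\<close>

definition bob_coll ::
    "(('a set \<Rightarrow> 'a set) list \<Rightarrow> 'a set set) \<Rightarrow> (nat \<Rightarrow> 'a set \<Rightarrow> 'a set) \<Rightarrow> nat \<Rightarrow> 'a set set" where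
  "bob_coll \<sigma> g n = \<sigma> (map g [0..<Suc n])"

definition prev_coll ::
    "'a topology \<Rightarrow> (('a set \<Rightarrow> 'a set) list \<Rightarrow> 'a set set) \<Rightarrow> (nat \<Rightarrow> 'a set \<Rightarrow> 'a set) \<Rightarrow> nat \<Rightarrow> 'a set set" where
  "prev_coll X \<sigma> g n = (if n = 0 then {topspace X} else bob_coll \<sigma> g (n - 1))"

definition alice_legal ::
    "'a topology \<Rightarrow> (('a set \<Rightarrow> 'a set) list \<Rightarrow> 'a set set) \<Rightarrow> (nat \<Rightarrow> 'a set \<Rightarrow> 'a set) \<Rightarrow> nat \<Rightarrow> bool" where
  "alice_legal X \<sigma> g n \<longleftrightarrow>
     (\<forall>B \<in> prev_coll X \<sigma> g n. openin X (g n B) \<and> g n B \<noteq> {} \<and> g n B \<subseteq> B)"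

definition bob_legal ::
    "'a topology \<Rightarrow> (('a set \<Rightarrow> 'a set) list \<Rightarrow> 'a set set) \<Rightarrow> (nat \<Rightarrow> 'a set \<Rightarrow> 'a set) \<Rightarrow> nat \<Rightarrow> bool" where
  "bob_legal X \<sigma> g n \<longleftrightarrow>
     finite (bob_coll \<sigma> g n) \<and>
     (\<forall>B \<in> bob_coll \<sigma> g n. openin X B \<and> B \<noteq> {} \<and>
        B \<subseteq> \<Union> (g n ` prev_coll X \<sigma> g n))"

definition bob_winning_strategy ::
    "'a topology \<Rightarrow> (('a set \<Rightarrow> 'a set) list \<Rightarrow> 'a set set) \<Rightarrow> bool" where
  "bob_winning_strategy X \<sigma> \<longleftrightarrow>
     (\<forall>g n. (\<forall>k\<le>n. alice_legal X \<sigma> g k) \<longrightarrow> bob_legal X \<sigma> g n) \<and>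
     (\<forall>g. (\<forall>n. alice_legal X \<sigma> g n) \<longrightarrow> (\<Inter>n. \<Union> (bob_coll \<sigma> g n)) \<noteq> {})"

definition bob_has_winning_strategy :: "'a topology \<Rightarrow> bool" where
  "bob_has_winning_strategy X \<longleftrightarrow> (\<exists>\<sigma>. bob_winning_strategy X \<sigma>)"

end

theory Submission
  imports Defs
begin

(* Let U n be dense open in X x Y and U0 x V0 a nonempty open box.  Alice plays against
   Bob's winning strategy along many branches at once.  At level n the branches carry
   pairwise disjoint open sets of Y whose union is dense in V0, and on a branch carrying V
   every answer A of Alice in inning n+1 satisfies A x V <= U n: Bob's collections are
   finite, so finitely many boxes fit into U n after shrinking V finitely often, and a
   maximal disjoint family of such shrinkings (Zorn) refines the level.  As Y is Baire,
   some y in V0 lies in a set of every level; by disjointness these sets form a single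
   branch, i.e. a legal play of Alice, and any point x in Bob's winning intersection gives
   (x, y) in every U n.  That X itself is Baire is the one-branch case: Alice answers each
   B of Bob by B intersected with U n. *)

lemma dense_openin_prod_contains_Times:
  assumes "openin X B" "B \<noteq> {}" "openin Y V" "V \<noteq> {}"
    and G: "openin (prod_topology X Y) G" "prod_topology X Y closure_of G = topspace (prod_topology X Y)"
  obtains A V' where "openin X A" "A \<noteq> {}" "A \<subseteq> B" "openin Y V'" "V' \<noteq> {}" "V' \<subseteq> V"
    "A \<times> V' \<subseteq> G"
proof -
  have BV: "openin (prod_topology X Y) (B \<times> V)" "B \<times> V \<noteq> {}"
    using assms(1-4) by (simp_all add: openin_prod_Times_iff)
  then obtain a b where ab: "(a, b) \<in> (B \<times> V) \<inter> G"
    using G(2) dense_intersects_open by (metis inf_commute subsetI subset_empty surj_pair)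
  have "openin (prod_topology X Y) ((B \<times> V) \<inter> G)"
    using BV(1) G(1) by (rule openin_Int)
  then obtain A V' where "openin X A" "openin Y V'" "a \<in> A" "b \<in> V'"
    "A \<times> V' \<subseteq> (B \<times> V) \<inter> G"
    using ab unfolding openin_prod_topology_alt by meson
  then show thesis
    by (intro that) blast+
qed

lemma dense_openin_prod_contains_boxes:
  assumes "finite \<C>" "\<And>B. B \<in> \<C> \<Longrightarrow> openin X B \<and> B \<noteq> {}"
    and "openin Y V" "V \<noteq> {}"
    and G: "openin (prod_topology X Y) G" "prod_topology X Y closure_of G = topspace (prod_topology X Y)"
  obtains f V' where "openin Y V'" "V' \<noteq> {}" "V' \<subseteq> V"
    "\<And>B. B \<in> \<C> \<Longrightarrow> openin X (f B) \<and> f B \<noteq> {} \<and> f B \<subseteq> B \<and> f B \<times> V' \<subseteq> G"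
proof -
  have "\<exists>f V'. openin Y V' \<and> V' \<noteq> {} \<and> V' \<subseteq> V \<and>
           (\<forall>B\<in>\<C>. openin X (f B) \<and> f B \<noteq> {} \<and> f B \<subseteq> B \<and> f B \<times> V' \<subseteq> G)"
    using assms(1,2)
  proof (induction \<C> rule: finite_induct)
    case empty
    then show ?case using assms(3,4) by blast
  next
    case (insert B \<C>)
    then obtain f V1 where V1: "openin Y V1" "V1 \<noteq> {}" "V1 \<subseteq> V"
      and f: "\<forall>B\<in>\<C>. openin X (f B) \<and> f B \<noteq> {} \<and> f B \<subseteq> B \<and> f B \<times> V1 \<subseteq> G"
      by auto
    have "openin X B" "B \<noteq> {}"
      using insert.prems by auto
    then obtain A V2 where A: "openin X A" "A \<noteq> {}" "A \<subseteq> B" and V2: "openin Y V2" "V2 \<noteq> {}"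
      "V2 \<subseteq> V1" and "A \<times> V2 \<subseteq> G"
      using dense_openin_prod_contains_Times[OF _ _ V1(1,2) G] by metis
    have "\<forall>B'\<in>insert B \<C>. openin X ((f(B := A)) B') \<and> (f(B := A)) B' \<noteq> {} \<and>
        (f(B := A)) B' \<subseteq> B' \<and> (f(B := A)) B' \<times> V2 \<subseteq> G"
    proof
      fix B' assume "B' \<in> insert B \<C>"
      then consider "B' = B" | "B' \<in> \<C>" "B' \<noteq> B"
        by blast
      then show "openin X ((f(B := A)) B') \<and> (f(B := A)) B' \<noteq> {} \<and>
          (f(B := A)) B' \<subseteq> B' \<and> (f(B := A)) B' \<times> V2 \<subseteq> G"
      proof cases
        case 1
        with A \<open>A \<times> V2 \<subseteq> G\<close> show ?thesis
          by simp
      next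
        case 2
        have "f B' \<times> V1 \<subseteq> G"
          using f 2(1) by blast
        then have "f B' \<times> V2 \<subseteq> G"
          using V2(3) by blast
        with f 2 show ?thesis
          by simp
      qed
    qed
    moreover have "openin Y V2 \<and> V2 \<noteq> {} \<and> V2 \<subseteq> V"
      using V1 V2 by auto
    ultimately show ?case
      by (intro exI[of _ "f(B := A)"] exI[of _ V2]) blast
  qed
  then obtain f V' where "openin Y V'" "V' \<noteq> {}" "V' \<subseteq> V"
    "\<forall>B\<in>\<C>. openin X (f B) \<and> f B \<noteq> {} \<and> f B \<subseteq> B \<and> f B \<times> V' \<subseteq> G"
    by blast
  then show thesis
    by (intro that[of V' f]) auto
qed

lemma disjoint_family_on_Union_chain:
  assumes "chain\<^sub>\<subseteq> \<D>" "\<And>F. F \<in> \<D> \<Longrightarrow> disjoint_family_on S F"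
  shows "disjoint_family_on S (\<Union>\<D>)"
  using pairwise_chain_Union[of \<D> "\<lambda>q q'. S q \<inter> S q' = {}", OF _ assms(1)] assms(2)
  by (simp add: disjoint_family_on_def pairwise_def)

lemma exists_disjoint_family_dense_in:
  assumes "openin Y V"
    and dense: "\<And>W. openin Y W \<Longrightarrow> W \<noteq> {} \<Longrightarrow> W \<subseteq> V \<Longrightarrow>
        \<exists>q. P q \<and> openin Y (S q) \<and> S q \<noteq> {} \<and> S q \<subseteq> W"
  obtains F where "\<And>q. q \<in> F \<Longrightarrow> P q \<and> openin Y (S q) \<and> S q \<noteq> {} \<and> S q \<subseteq> V"
    "disjoint_family_on S F" "V \<subseteq> Y closure_of (\<Union>(S ` F))"
proof -
  define good where "good q \<longleftrightarrow> P q \<and> openin Y (S q) \<and> S q \<noteq> {} \<and> S q \<subseteq> V" for q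
  define \<F> where "\<F> = {F. Ball F good \<and> disjoint_family_on S F}"
  have "\<Union>\<D> \<in> \<F>" if "\<D> \<in> chains \<F>" for \<D>
  proof -
    from that have "\<D> \<subseteq> \<F>" "chain\<^sub>\<subseteq> \<D>"
      by (simp_all add: chains_def)
    then show ?thesis
      unfolding \<F>_def by (auto intro!: disjoint_family_on_Union_chain)
  qed
  then obtain M where "M \<in> \<F>" and max: "\<And>F. F \<in> \<F> \<Longrightarrow> M \<subseteq> F \<Longrightarrow> F = M"
    using Zorn_Lemma[of \<F>] by auto
  then have M: "Ball M good" "disjoint_family_on S M"
    by (simp_all add: \<F>_def)
  have "V \<subseteq> Y closure_of (\<Union>(S ` M))"
  proof (rule ccontr)
    define W where "W = V - Y closure_of (\<Union>(S ` M))"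
    assume "\<not> V \<subseteq> Y closure_of (\<Union>(S ` M))"
    then have "W \<noteq> {}"
      by (auto simp: W_def)
    moreover have "openin Y W"
      unfolding W_def using assms(1) by (intro openin_diff closedin_closure_of)
    moreover have "W \<subseteq> V"
      by (auto simp: W_def)
    ultimately obtain q where "P q" "openin Y (S q)" "S q \<noteq> {}" "S q \<subseteq> W"
      using dense[of W] by blast
    with \<open>W \<subseteq> V\<close> have q: "good q" "S q \<subseteq> W"
      unfolding good_def by auto
    have "S q' \<subseteq> Y closure_of (\<Union>(S ` M))" if "q' \<in> M" for q'
    proof -
      have "openin Y (S q')"
        using that M(1) by (simp add: good_def)
      with that have "S q' \<subseteq> topspace Y \<inter> \<Union>(S ` M)"
        by (auto dest: openin_subset)
      then show ?thesis
        using closure_of_subset_Int by (rule order_trans)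
    qed
    with q have "S q \<inter> S q' = {}" if "q' \<in> M" for q'
      using that by (auto simp: W_def)
    moreover have "q \<notin> M"
      using calculation q(1) unfolding good_def by blast
    ultimately have "insert q M \<in> \<F>"
      using q(1) M by (auto simp: \<F>_def disjoint_family_on_insert)
    with max \<open>q \<notin> M\<close> show False
      by blast
  qed
  with M show thesis
    by (intro that[of M]) (auto simp: good_def)
qed

lemma disjoint_family_on_UN_refine:
  assumes "disjoint_family_on S T"
    and "\<And>p. p \<in> T \<Longrightarrow> disjoint_family_on S (F p)"
    and "\<And>p q. p \<in> T \<Longrightarrow> q \<in> F p \<Longrightarrow> S q \<subseteq> S p"
  shows "disjoint_family_on S (\<Union>p\<in>T. F p)"
  unfolding disjoint_family_on_def
proof (intro ballI impI)
  fix q q' assume "q \<in> (\<Union>p\<in>T. F p)" "q' \<in> (\<Union>p\<in>T. F p)" "q \<noteq> q'"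
  then obtain p p' where p: "p \<in> T" "q \<in> F p" and p': "p' \<in> T" "q' \<in> F p'"
    by blast
  show "S q \<inter> S q' = {}"
  proof (cases "p = p'")
    case True
    with assms(2) p p' \<open>q \<noteq> q'\<close> show ?thesis
      by (auto dest: disjoint_family_onD)
  next
    case False
    with assms(1) p p' have "S p \<inter> S p' = {}"
      by (auto dest: disjoint_family_onD)
    with assms(3)[OF p] assms(3)[OF p'] show ?thesis
      by blast
  qed
qed

lemma closure_of_UN_refine:
  assumes "V \<subseteq> Y closure_of (\<Union>(S ` T))"
    and "\<And>p. p \<in> T \<Longrightarrow> S p \<subseteq> Y closure_of (\<Union>(S ` F p))"
  shows "V \<subseteq> Y closure_of (\<Union>(S ` (\<Union>p\<in>T. F p)))"
proof -
  have "S p \<subseteq> Y closure_of (\<Union>(S ` (\<Union>p\<in>T. F p)))" if "p \<in> T" for p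
  proof -
    have "\<Union>(S ` F p) \<subseteq> \<Union>(S ` (\<Union>p\<in>T. F p))"
      using that by blast
    then have "Y closure_of (\<Union>(S ` F p)) \<subseteq> Y closure_of (\<Union>(S ` (\<Union>p\<in>T. F p)))"
      by (rule closure_of_mono)
    with assms(2)[OF that] show ?thesis
      by (rule order_trans)
  qed
  then have "Y closure_of (\<Union>(S ` T)) \<subseteq> Y closure_of (\<Union>(S ` (\<Union>p\<in>T. F p)))"
    by (intro closure_of_minimal) auto
  with assms(1) show ?thesis
    by (rule order_trans)
qed

lemma Baire_space_Inter_meets_openin:
  fixes D :: "nat \<Rightarrow> 'a set"
  assumes "Baire_space Y" "openin Y V" "V \<noteq> {}"
    and "\<And>n. openin Y (D n)" "\<And>n. V \<subseteq> Y closure_of (D n)"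
  obtains y where "y \<in> V" "\<And>n. y \<in> D n"
proof -
  \<comment> \<open>Adding the exterior of \<open>V\<close> makes every \<open>D n\<close> dense.\<close>
  define E where "E n = D n \<union> (topspace Y - Y closure_of V)" for n
  have "openin Y (E n)" for n
    unfolding E_def using assms(4) by (intro openin_Un openin_diff) auto
  moreover have "Y closure_of (E n) = topspace Y" for n
  proof -
    have "Y closure_of V \<subseteq> Y closure_of (D n)"
      using assms(5) by (intro closure_of_minimal) auto
    moreover have "topspace Y - Y closure_of V \<subseteq> Y closure_of (topspace Y - Y closure_of V)"
      by (rule closure_of_subset) auto
    ultimately have "topspace Y \<subseteq> Y closure_of (E n)"
      unfolding E_def closure_of_Un by blast
    then show ?thesis
      by (simp add: closure_of_subset_topspace subset_antisym)
  qed
  ultimately have "Y closure_of (topspace Y \<inter> (\<Inter>n. E n)) = topspace Y"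
    using assms(1)[unfolded Baire_space_def, rule_format, of E] by blast
  with assms(2,3) have "(topspace Y \<inter> (\<Inter>n. E n)) \<inter> V \<noteq> {}"
    unfolding dense_intersects_open by blast
  then obtain y where y: "y \<in> V" "\<And>n. y \<in> E n"
    by blast
  moreover have "y \<in> Y closure_of V"
    using closure_of_subset[OF openin_subset[OF assms(2)]] y(1) by blast
  ultimately have "y \<in> D n" for n
    using y(2)[of n] unfolding E_def by blast
  with y(1) show thesis
    by (rule that)
qed

lemma disjoint_levels_branch:
  assumes "\<And>n. disjoint_family_on S (T n)" "\<And>n. y \<in> \<Union>(S ` T n)"
    and "\<And>n q. q \<in> T (Suc n) \<Longrightarrow> \<exists>p\<in>T n. R n p q \<and> S q \<subseteq> S p"
  obtains p where "\<And>n. p n \<in> T n" "\<And>n. y \<in> S (p n)" "\<And>n. R n (p n) (p (Suc n))"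
proof -
  have "\<forall>n. \<exists>p\<in>T n. y \<in> S p"
    using assms(2) by blast
  then obtain p where p: "\<And>n. p n \<in> T n \<and> y \<in> S (p n)"
    by metis
  have "R n (p n) (p (Suc n))" for n
  proof -
    obtain p' where "p' \<in> T n" "R n p' (p (Suc n))" "S (p (Suc n)) \<subseteq> S p'"
      using assms(3) p by blast
    moreover from this have "y \<in> S p'"
      using p[of "Suc n"] by blast
    with \<open>p' \<in> T n\<close> have "p' = p n"
      using assms(1)[of n] p[of n] by (auto simp: disjoint_family_on_def)
    ultimately show ?thesis
      by simp
  qed
  with p that show thesis
    by blast
qed

lemma diagonal_eq:
  assumes "\<And>n i. i \<le> n \<Longrightarrow> f (Suc n) i = f n i"
  shows "i \<le> n \<Longrightarrow> f n i = f i i"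
proof (induction n)
  case (Suc n)
  with assms show ?case
    by (cases "i = Suc n") auto
qed simp

lemma prev_coll_0 [simp]: "prev_coll X \<sigma> g 0 = {topspace X}"
  by (simp add: prev_coll_def)

lemma prev_coll_Suc [simp]: "prev_coll X \<sigma> g (Suc n) = bob_coll \<sigma> g n"
  by (simp add: prev_coll_def)

lemma bob_coll_cong:
  "(\<And>i. i \<le> n \<Longrightarrow> g i = g' i) \<Longrightarrow> bob_coll \<sigma> g n = bob_coll \<sigma> g' n"
  unfolding bob_coll_def by (metis atLeastLessThan_iff less_Suc_eq_le map_cong set_upt)

lemma prev_coll_cong:
  "(\<And>i. i \<le> n \<Longrightarrow> g i = g' i) \<Longrightarrow> prev_coll X \<sigma> g n = prev_coll X \<sigma> g' n"
  unfolding prev_coll_def using bob_coll_cong[of "n - 1" g g' \<sigma>] by simp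

lemma alice_legal_cong:
  "(\<And>i. i \<le> n \<Longrightarrow> g i = g' i) \<Longrightarrow> alice_legal X \<sigma> g n = alice_legal X \<sigma> g' n"
  unfolding alice_legal_def by (simp add: prev_coll_cong[of n g g'])

lemma bob_winning_strategy_legal:
  assumes "bob_winning_strategy X \<sigma>" "\<And>k. k \<le> n \<Longrightarrow> alice_legal X \<sigma> g k"
  shows "finite (bob_coll \<sigma> g n)" "\<And>B. B \<in> bob_coll \<sigma> g n \<Longrightarrow> openin X B \<and> B \<noteq> {}"
    "\<And>B. B \<in> bob_coll \<sigma> g n \<Longrightarrow> B \<subseteq> \<Union>(g n ` prev_coll X \<sigma> g n)"
proof -
  have "bob_legal X \<sigma> g n"
    using assms(1)[unfolded bob_winning_strategy_def] assms(2) by simp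
  then show "finite (bob_coll \<sigma> g n)" "\<And>B. B \<in> bob_coll \<sigma> g n \<Longrightarrow> openin X B \<and> B \<noteq> {}"
    "\<And>B. B \<in> bob_coll \<sigma> g n \<Longrightarrow> B \<subseteq> \<Union>(g n ` prev_coll X \<sigma> g n)"
    unfolding bob_legal_def by blast+
qed

lemma bob_winning_strategy_play:
  assumes "bob_winning_strategy X \<sigma>" "\<And>n. alice_legal X \<sigma> g n"
  obtains x where "\<And>n. \<exists>B\<in>prev_coll X \<sigma> g n. x \<in> g n B"
proof -
  have "(\<Inter>n. \<Union>(bob_coll \<sigma> g n)) \<noteq> {}"
    using assms(1)[unfolded bob_winning_strategy_def] assms(2) by blast
  then obtain x where x: "\<And>n. x \<in> \<Union>(bob_coll \<sigma> g n)"
    by blast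
  have "\<exists>B\<in>prev_coll X \<sigma> g n. x \<in> g n B" for n
  proof -
    have "\<Union>(bob_coll \<sigma> g n) \<subseteq> \<Union>(g n ` prev_coll X \<sigma> g n)"
      using bob_winning_strategy_legal(3)[OF assms(1) assms(2)] by blast
    with x[of n] show ?thesis
      by blast
  qed
  then show thesis
    by (rule that)
qed

lemma Baire_space_if_bob_winning:
  assumes win: "bob_winning_strategy X \<sigma>"
  shows "Baire_space X"
  unfolding Baire_space_def dense_intersects_open
proof (intro allI impI)
  fix U :: "nat \<Rightarrow> 'a set" and W
  assume U: "\<forall>n. openin X (U n) \<and> (\<forall>T. openin X T \<and> T \<noteq> {} \<longrightarrow> U n \<inter> T \<noteq> {})"
    and W: "openin X W \<and> W \<noteq> {}"
  define g where "g n B = (if n = 0 then W else B \<inter> U (n - 1))" for n and B :: "'a set"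
  have g_0: "g 0 B = W" and g_Suc: "g (Suc n) B = B \<inter> U n" for n B
    by (simp_all add: g_def)
  have legal: "alice_legal X \<sigma> g n" for n
  proof (induction n rule: less_induct)
    case (less n)
    show ?case
    proof (cases n)
      case 0
      with W show ?thesis
        by (simp add: alice_legal_def g_0 openin_subset)
    next
      case (Suc m)
      with less have "openin X B \<and> B \<noteq> {}" if "B \<in> bob_coll \<sigma> g m" for B
        using bob_winning_strategy_legal(2)[OF win, of m g] that by simp
      then have "openin X (B \<inter> U m) \<and> B \<inter> U m \<noteq> {}" if "B \<in> bob_coll \<sigma> g m" for B
        using U that by (metis inf_commute openin_Int)
      with Suc show ?thesis
        by (simp add: alice_legal_def g_Suc)
    qed
  qed
  obtain x where x: "\<And>n. \<exists>B\<in>prev_coll X \<sigma> g n. x \<in> g n B"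
    using bob_winning_strategy_play[OF win legal] by blast
  have "x \<in> W"
    using x[of 0] by (simp add: g_0)
  moreover have "x \<in> U n" for n
    using x[of "Suc n"] by (auto simp: g_Suc)
  ultimately show "(topspace X \<inter> (\<Inter>n. U n)) \<inter> W \<noteq> {}"
    using W openin_subset by blast
qed

(* A branch of Alice's simultaneous plays: her moves so far and the open set of Y it carries. *)
type_synonym ('a, 'b) position = "(nat \<Rightarrow> 'a set \<Rightarrow> 'a set) \<times> 'b set"

locale product_game =
  fixes X :: "'a topology" and Y :: "'b topology"
    and \<sigma> :: "('a set \<Rightarrow> 'a set) list \<Rightarrow> 'a set set"
    and U :: "nat \<Rightarrow> ('a \<times> 'b) set"
  assumes winning: "bob_winning_strategy X \<sigma>"
    and openin_U: "\<And>n. openin (prod_topology X Y) (U n)"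
    and dense_U: "\<And>n. prod_topology X Y closure_of U n = topspace (prod_topology X Y)"
begin

definition good_position :: "nat \<Rightarrow> ('a, 'b) position \<Rightarrow> bool" where
  "good_position n p \<longleftrightarrow> openin Y (snd p) \<and> snd p \<noteq> {} \<and>
     (\<forall>k\<le>n. alice_legal X \<sigma> (fst p) k) \<and>
     (\<forall>m<n. \<forall>B\<in>bob_coll \<sigma> (fst p) m. fst p (Suc m) B \<times> snd p \<subseteq> U m)"

definition extends_position :: "nat \<Rightarrow> ('a, 'b) position \<Rightarrow> ('a, 'b) position \<Rightarrow> bool" where
  "extends_position n p q \<longleftrightarrow> (\<forall>i\<le>n. fst q i = fst p i) \<and> snd q \<subseteq> snd p"

definition good_level :: "nat \<Rightarrow> 'b set \<Rightarrow> ('a, 'b) position set \<Rightarrow> bool" where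
  "good_level n V T \<longleftrightarrow> (\<forall>p\<in>T. good_position n p) \<and> disjoint_family_on snd T \<and>
     V \<subseteq> Y closure_of (\<Union>(snd ` T))"

lemma good_level_0:
  assumes "openin X U0" "U0 \<noteq> {}" "openin Y V0" "V0 \<noteq> {}"
  shows "good_level 0 V0 {(\<lambda>_ _. U0, V0)}"
proof -
  have "alice_legal X \<sigma> (\<lambda>_ _. U0) 0"
    using assms(1,2) by (simp add: alice_legal_def openin_subset)
  moreover have "V0 \<subseteq> Y closure_of V0"
    using assms(3) by (simp add: closure_of_subset openin_subset)
  ultimately show ?thesis
    using assms(3,4) by (simp add: good_level_def good_position_def disjoint_family_on_def)
qed

lemma good_position_SucI:
  assumes p: "good_position n (g, V)" and V': "openin Y V'" "V' \<noteq> {}" "V' \<subseteq> V"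
    and f: "\<And>B. B \<in> bob_coll \<sigma> g n \<Longrightarrow> openin X (f B) \<and> f B \<noteq> {} \<and> f B \<subseteq> B \<and> f B \<times> V' \<subseteq> U n"
  shows "good_position (Suc n) (g(Suc n := f), V')"
proof -
  define g' where "g' = g(Suc n := f)"
  have agree: "\<And>i. i \<le> n \<Longrightarrow> g' i = g i"
    by (simp add: g'_def)
  then have coll: "bob_coll \<sigma> g' m = bob_coll \<sigma> g m" if "m \<le> n" for m
    using that by (intro bob_coll_cong) simp
  have "alice_legal X \<sigma> g' k" if "k \<le> Suc n" for k
  proof (cases "k = Suc n")
    case True
    with f coll[of n] show ?thesis
      by (simp add: alice_legal_def g'_def)
  next
    case False
    with that p agree have "alice_legal X \<sigma> g k" "k \<le> n"
      by (simp_all add: good_position_def)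
    with agree show ?thesis
      using alice_legal_cong[of k g' g] by simp
  qed
  moreover have "g' (Suc m) B \<times> V' \<subseteq> U m" if "m < Suc n" "B \<in> bob_coll \<sigma> g' m" for m B
  proof (cases "m = n")
    case True
    with f that coll[of n] show ?thesis
      by (simp add: g'_def)
  next
    case False
    with that have "m < n" "B \<in> bob_coll \<sigma> g m"
      using coll[of m] by simp_all
    with p have "g (Suc m) B \<times> V \<subseteq> U m"
      by (simp add: good_position_def)
    with V'(3) \<open>m < n\<close> show ?thesis
      by (auto simp: g'_def)
  qed
  ultimately show ?thesis
    using V' unfolding good_position_def g'_def by auto
qed

lemma good_position_extend:
  assumes p: "good_position n p" and W: "openin Y W" "W \<noteq> {}" "W \<subseteq> snd p"
  obtains q where "good_position (Suc n) q" "extends_position n p q" "snd q \<subseteq> W"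
proof -
  have "\<And>k. k \<le> n \<Longrightarrow> alice_legal X \<sigma> (fst p) k"
    using p by (simp add: good_position_def)
  note Bob = bob_winning_strategy_legal[OF winning, of n "fst p", OF this]
  obtain f V' where V': "openin Y V'" "V' \<noteq> {}" "V' \<subseteq> W"
    and f: "\<And>B. B \<in> bob_coll \<sigma> (fst p) n \<Longrightarrow>
      openin X (f B) \<and> f B \<noteq> {} \<and> f B \<subseteq> B \<and> f B \<times> V' \<subseteq> U n"
    using dense_openin_prod_contains_boxes[OF Bob(1,2) W(1,2) openin_U dense_U] by metis
  have "good_position (Suc n) ((fst p)(Suc n := f), V')"
    using p V' W(3) f by (intro good_position_SucI[where V = "snd p"]) auto
  moreover have "extends_position n p ((fst p)(Suc n := f), V')"
    using V' W(3) by (auto simp: extends_position_def)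
  ultimately show thesis
    using V'(3) that by simp
qed

lemma good_level_Suc:
  assumes "good_level n V T"
  obtains T' where "good_level (Suc n) V T'" "\<And>q. q \<in> T' \<Longrightarrow> \<exists>p\<in>T. extends_position n p q"
proof -
  have "\<exists>F. (\<forall>q\<in>F. (good_position (Suc n) q \<and> extends_position n p q) \<and> openin Y (snd q)
      \<and> snd q \<noteq> {} \<and> snd q \<subseteq> snd p) \<and> disjoint_family_on snd F
      \<and> snd p \<subseteq> Y closure_of (\<Union>(snd ` F))" if "p \<in> T" for p
  proof -
    have p: "good_position n p"
      using assms that by (simp add: good_level_def)
    then have "openin Y (snd p)"
      by (simp add: good_position_def)
    then show ?thesis
    proof (rule exists_disjoint_family_dense_in)
      fix W assume "openin Y W" "W \<noteq> {}" "W \<subseteq> snd p"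
      with p obtain q where "good_position (Suc n) q" "extends_position n p q" "snd q \<subseteq> W"
        by (rule good_position_extend)
      then show "\<exists>q. (good_position (Suc n) q \<and> extends_position n p q) \<and> openin Y (snd q)
          \<and> snd q \<noteq> {} \<and> snd q \<subseteq> W"
        by (intro exI[of _ q]) (simp add: good_position_def)
    qed blast
  qed
  then obtain F where F: "\<And>p. p \<in> T \<Longrightarrow> (\<forall>q\<in>F p. (good_position (Suc n) q \<and> extends_position n p q)
      \<and> openin Y (snd q) \<and> snd q \<noteq> {} \<and> snd q \<subseteq> snd p) \<and> disjoint_family_on snd (F p)
      \<and> snd p \<subseteq> Y closure_of (\<Union>(snd ` F p))"
    by metis
  have "disjoint_family_on snd (\<Union>p\<in>T. F p)"
    using assms F by (intro disjoint_family_on_UN_refine) (auto simp: good_level_def)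
  moreover have "V \<subseteq> Y closure_of (\<Union>(snd ` (\<Union>p\<in>T. F p)))"
    using assms F by (intro closure_of_UN_refine) (auto simp: good_level_def)
  ultimately have "good_level (Suc n) V (\<Union>p\<in>T. F p)"
    using F by (auto simp: good_level_def)
  moreover have "\<exists>p\<in>T. extends_position n p q" if "q \<in> (\<Union>p\<in>T. F p)" for q
    using F that by blast
  ultimately show thesis
    by (rule that)
qed

lemma exists_good_levels:
  assumes "openin X U0" "U0 \<noteq> {}" "openin Y V0" "V0 \<noteq> {}"
  obtains T where "T 0 = {(\<lambda>_ _. U0, V0)}" "\<And>n. good_level n V0 (T n)"
    "\<And>n q. q \<in> T (Suc n) \<Longrightarrow> \<exists>p\<in>T n. extends_position n p q"
proof -
  define P where "P n T \<longleftrightarrow> good_level n V0 T \<and> (n = 0 \<longrightarrow> T = {(\<lambda>_ _. U0, V0)})" for n T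
  define R where "R n T T' \<longleftrightarrow> (\<forall>q\<in>T'. \<exists>p\<in>T. extends_position n p q)" for n T T'
  have "\<exists>T. P 0 T"
    unfolding P_def using good_level_0[OF assms] by blast
  moreover have "\<exists>T'. P (Suc n) T' \<and> R n T T'" if "P n T" for n T
  proof -
    from that have "good_level n V0 T"
      by (simp add: P_def)
    then obtain T' where "good_level (Suc n) V0 T'" "\<And>q. q \<in> T' \<Longrightarrow> \<exists>p\<in>T. extends_position n p q"
      using good_level_Suc by blast
    then show ?thesis
      unfolding P_def R_def by blast
  qed
  ultimately obtain T where T: "\<And>n. P n (T n) \<and> R n (T n) (T (Suc n))"
    using dependent_nat_choice[of P R] by blast
  have "T 0 = {(\<lambda>_ _. U0, V0)}"
    using T[of 0] by (simp add: P_def)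
  moreover have "good_level n V0 (T n)" for n
    using T[of n] by (simp add: P_def)
  moreover have "\<exists>p\<in>T n. extends_position n p q" if "q \<in> T (Suc n)" for n q
    using T[of n] that by (simp add: R_def)
  ultimately show thesis
    by (rule that)
qed

lemma diagonal_play:
  assumes "\<And>n. good_position n (p n)" "\<And>n. extends_position n (p n) (p (Suc n))"
  defines "G \<equiv> \<lambda>k. fst (p k) k"
  shows "alice_legal X \<sigma> G n"
    and "B \<in> bob_coll \<sigma> G n \<Longrightarrow> G (Suc n) B \<times> snd (p (Suc n)) \<subseteq> U n"
proof -
  have agree: "fst (p n) i = G i" if "i \<le> n" for n i
    unfolding G_def using assms(2) that
    by (intro diagonal_eq[of "\<lambda>n. fst (p n)"]) (auto simp: extends_position_def)
  have "alice_legal X \<sigma> (fst (p n)) n"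
    using assms(1)[of n] by (simp add: good_position_def)
  then show "alice_legal X \<sigma> G n"
    using alice_legal_cong[of n "fst (p n)" G] agree by simp
  assume "B \<in> bob_coll \<sigma> G n"
  then have "B \<in> bob_coll \<sigma> (fst (p (Suc n))) n"
    using bob_coll_cong[of n "fst (p (Suc n))" G] agree by simp
  with assms(1)[of "Suc n"] have "fst (p (Suc n)) (Suc n) B \<times> snd (p (Suc n)) \<subseteq> U n"
    unfolding good_position_def by blast
  with agree[of "Suc n" "Suc n"] show "G (Suc n) B \<times> snd (p (Suc n)) \<subseteq> U n"
    by simp
qed

lemma box_meets_all_U:
  assumes "Baire_space Y" "openin X U0" "U0 \<noteq> {}" "openin Y V0" "V0 \<noteq> {}"
  obtains x y where "x \<in> U0" "y \<in> V0" "\<And>n. (x, y) \<in> U n"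
proof -
  obtain T where T0: "T 0 = {(\<lambda>_ _. U0, V0)}" and T: "\<And>n. good_level n V0 (T n)"
    and ext: "\<And>n q. q \<in> T (Suc n) \<Longrightarrow> \<exists>p\<in>T n. extends_position n p q"
    using exists_good_levels[OF assms(2-5)] by blast
  have D: "openin Y (\<Union>(snd ` T n))" "V0 \<subseteq> Y closure_of (\<Union>(snd ` T n))" for n
    using T[of n] unfolding good_level_def good_position_def by (auto intro!: openin_Union)
  obtain y where "y \<in> V0" and y: "\<And>n. y \<in> \<Union>(snd ` T n)"
    using Baire_space_Inter_meets_openin[OF assms(1,4,5), of "\<lambda>n. \<Union>(snd ` T n)", OF D] by blast
  have disj: "disjoint_family_on snd (T n)" for n
    using T[of n] by (simp add: good_level_def)
  have ext': "\<exists>p\<in>T n. extends_position n p q \<and> snd q \<subseteq> snd p" if "q \<in> T (Suc n)" for n q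
    using ext[OF that] by (auto simp: extends_position_def)
  obtain p where p: "\<And>n. p n \<in> T n" "\<And>n. y \<in> snd (p n)"
    and ext_p: "\<And>n. extends_position n (p n) (p (Suc n))"
    using disjoint_levels_branch[of snd T y extends_position, OF disj y ext'] by blast
  have good_p: "good_position n (p n)" for n
    using T[of n] p(1)[of n] by (simp add: good_level_def)
  define G where "G k = fst (p k) k" for k
  have "alice_legal X \<sigma> G n" for n
    unfolding G_def by (rule diagonal_play(1)[OF good_p ext_p])
  then obtain x where x: "\<And>n. \<exists>B\<in>prev_coll X \<sigma> G n. x \<in> G n B"
    using bob_winning_strategy_play[OF winning] by blast
  have "x \<in> U0"
    using x[of 0] p(1)[of 0] by (simp add: G_def T0)
  moreover note \<open>y \<in> V0\<close>
  moreover have "(x, y) \<in> U n" for n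
  proof -
    obtain B where "B \<in> bob_coll \<sigma> G n" "x \<in> G (Suc n) B"
      using x[of "Suc n"] by auto
    moreover from this(1) have "G (Suc n) B \<times> snd (p (Suc n)) \<subseteq> U n"
      unfolding G_def by (rule diagonal_play(2)[OF good_p ext_p])
    ultimately show ?thesis
      using p(2)[of "Suc n"] by blast
  qed
  ultimately show thesis
    by (rule that)
qed

end

lemma Baire_space_prod_topology_if_bob_winning:
  assumes win: "bob_winning_strategy X \<sigma>" and "Baire_space Y"
  shows "Baire_space (prod_topology X Y)"
  unfolding Baire_space_def
proof (intro allI impI)
  fix U :: "nat \<Rightarrow> ('a \<times> 'b) set"
  assume "\<forall>n. openin (prod_topology X Y) (U n) \<and>
    prod_topology X Y closure_of U n = topspace (prod_topology X Y)"
  then interpret product_game X Y \<sigma> U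
    by unfold_locales (simp_all add: win)
  show "prod_topology X Y closure_of (topspace (prod_topology X Y) \<inter> (\<Inter>n. U n)) =
      topspace (prod_topology X Y)"
    unfolding dense_intersects_open
  proof (intro allI impI)
    fix W assume W: "openin (prod_topology X Y) W \<and> W \<noteq> {}"
    then obtain a b where "(a, b) \<in> W"
      by auto
    with W[THEN conjunct1] obtain U0 V0 where "openin X U0" "openin Y V0" "a \<in> U0" "b \<in> V0" "U0 \<times> V0 \<subseteq> W"
      unfolding openin_prod_topology_alt by meson
    then have UV: "openin X U0" "U0 \<noteq> {}" "openin Y V0" "V0 \<noteq> {}"
      by auto
    obtain x y where "x \<in> U0" "y \<in> V0" "\<And>n. (x, y) \<in> U n"
      using box_meets_all_U[OF \<open>Baire_space Y\<close> UV] by blast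
    moreover from calculation have "(x, y) \<in> topspace (prod_topology X Y)"
      using openin_subset[OF UV(1)] openin_subset[OF UV(3)] by auto
    ultimately show "(topspace (prod_topology X Y) \<inter> (\<Inter>n. U n)) \<inter> W \<noteq> {}"
      using \<open>U0 \<times> V0 \<subseteq> W\<close> by blast
  qed
qed

theorem proposition2p3:
  fixes X :: "'a topology"
  assumes "Hausdorff_space X"
    and "\<forall>x \<in> topspace X. \<not> openin X {x}"
    and "bob_has_winning_strategy X"
  shows "Baire_space X \<and>
         (\<forall>Y :: 'b topology. Baire_space Y \<longrightarrow> Baire_space (prod_topology X Y))"
proof -
  obtain \<sigma> where win: "bob_winning_strategy X \<sigma>"
    using assms(3) unfolding bob_has_winning_strategy_def by blast
  show ?thesis
    using Baire_space_if_bob_winning[OF win] Baire_space_prod_topology_if_bob_winning[OF win]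
    by blast
qed

end
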